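(* Let $\mathcal{H}$ be a real Hilbert space, $T\ge1$ an integer (known to the player), $G>0$, $\mathcal{G}=\{g\in\mathcal{H}:\|g\|\le G\}$, $\epsilon>0$, and $a>G^2\pi/2$. Consider the strategy that, for $t=0,\dots,T-1$, plays \[ w_{t+1}=\epsilon\,\hat\theta_t\,\frac{\exp\Big(\frac{(\|\theta_t\|+G)^2}{2aT-\pi G^2(T-t-1)}\Big)-\exp\Big(\frac{(\|\theta_t\|-G)^2}{2aT-\pi G^2(T-t-1)}\Big)}{2G\sqrt{1-\frac{\pi G^2(T-t-1)}{2aT}}}. \] Then for any sequence of linear costs $g_1,\dots,g_T\in\mathcal{G}$ and any $u\in\mathcal{H}$, \[ \operatorname{Regret}(u)\ \le\ \|u\|\sqrt{2aT\log\Big(\frac{\sqrt{aT}\,\|u\|}{\epsilon}+1\Big)}+\epsilon\Big(\Big(1-\frac{\pi G^2}{2a}\Big)^{-1/2}-1\Big). \]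
   Context: Online linear optimization: on rounds $t=1,\dots,T$ the player chooses $w_t\in\mathcal{H}$, the adversary chooses $g_t\in\mathcal{G}$, the player suffers loss $\langle w_t,g_t\rangle$. $\theta_t=-\sum_{s=1}^t g_s$ ($\theta_0=0$); $\hat\theta=\theta/\|\theta\|$ if $\theta\ne0$ and $\hat\theta=0$ otherwise. $\operatorname{Regret}(u)=\sum_{t=1}^T\langle g_t,w_t-u\rangle$. *)

theory Defs
  imports "HOL-Analysis.Analysis"
begin

text \<open>Online linear optimization. Costs g_1,...,g_T are given as g :: nat => 'a (indices 1..T).\<close>

definition theta :: "(nat \<Rightarrow> 'a::real_inner) \<Rightarrow> nat \<Rightarrow> 'a" where
  "theta g t = - (\<Sum>s=1..t. g s)"

definition hat :: "'a::real_normed_vector \<Rightarrow> 'a" where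
  "hat x = (if x \<noteq> 0 then x /\<^sub>R norm x else 0)"

text \<open>The strategy: w_{t+1} is computed from theta_t, for t = 0..T-1.\<close>
definition kt_play ::
  "real \<Rightarrow> real \<Rightarrow> real \<Rightarrow> nat \<Rightarrow> (nat \<Rightarrow> 'a::real_inner) \<Rightarrow> nat \<Rightarrow> 'a" where
  "kt_play eps G a T g t =
     (let th = theta g t; D = 2 * a * real T - pi * G\<^sup>2 * (real T - real t - 1) in
      (eps * (exp ((norm th + G)\<^sup>2 / D) - exp ((norm th - G)\<^sup>2 / D))
         / (2 * G * sqrt (1 - pi * G\<^sup>2 * (real T - real t - 1) / (2 * a * real T))))
      *\<^sub>R hat th)"

definition regret :: "nat \<Rightarrow> (nat \<Rightarrow> 'a::real_inner) \<Rightarrow> (nat \<Rightarrow> 'a) \<Rightarrow> 'a \<Rightarrow> real" where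
  "regret T w g u = (\<Sum>t=1..T. inner (g t) (w t - u))"

end

theory Submission
  imports Defs "HOL-Probability.Hoeffding"
begin

text \<open>
  The strategy plays the central difference of the potential
  \<open>\<Phi>\<^sub>n(r) = \<epsilon> exp (r\<^sup>2 / D\<^sub>n) / sqrt (D\<^sub>n / 2aT)\<close>, \<open>D\<^sub>n = 2aT - \<pi>G\<^sup>2(T - n)\<close>,
  evaluated at \<open>\<parallel>\<theta>\<^sub>n\<parallel>\<close> in the direction \<open>\<theta>\<^sub>n/\<parallel>\<theta>\<^sub>n\<parallel>\<close>. Convexity reduces one round to the
  one-dimensional inequality \<open>(\<Phi>\<^sub>n\<^sub>+\<^sub>1(x + G) + \<Phi>\<^sub>n\<^sub>+\<^sub>1(x - G))/2 \<le> \<Phi>\<^sub>n(x)\<close>, which follows from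
  Hoeffding's bound on \<open>cosh\<close>; the increase \<open>\<pi>G\<^sup>2\<close> of the denominator pays for the spread.
  Hence \<open>\<Sum>\<langle>g\<^sub>t, w\<^sub>t\<rangle> \<le> \<Phi>\<^sub>0(0) - \<Phi>\<^sub>T(\<parallel>\<theta>\<^sub>T\<parallel>)\<close>, and
  \<open>\<parallel>\<theta>\<^sub>T\<parallel>\<parallel>u\<parallel> - \<Phi>\<^sub>T(\<parallel>\<theta>\<^sub>T\<parallel>)\<close> is bounded by the Fenchel conjugate of \<open>\<Phi>\<^sub>T\<close> at \<open>\<parallel>u\<parallel>\<close>.
\<close>

lemma mult_minus_exp_square_le:
  fixes x U \<alpha> \<beta> :: real
  assumes x: "x \<ge> 0" and U: "U \<ge> 0" and \<alpha>: "\<alpha> > 0" and \<beta>: "\<beta> > 0"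
  shows "x * U - \<beta> * exp (x\<^sup>2 / (2 * \<alpha>)) \<le> U * sqrt (2 * \<alpha> * ln (sqrt \<alpha> * U / \<beta> + 1)) - \<beta>"
proof -
  define c where "c = sqrt \<alpha> * U / \<beta> + 1"
  have c1: "c \<ge> 1" using U \<alpha> \<beta> by (simp add: c_def)
  define L where "L = sqrt (2 * \<alpha> * ln c)"
  have L0: "L \<ge> 0" unfolding L_def using c1 \<alpha> by simp
  have exp_L: "exp (L\<^sup>2 / (2 * \<alpha>)) = c" unfolding L_def using c1 \<alpha> by simp
  have "x * U - \<beta> * exp (x\<^sup>2 / (2 * \<alpha>)) \<le> U * L - \<beta>"
  proof (cases "x \<le> L")
    case True
    have "x * U \<le> L * U" using True U by (simp add: mult_right_mono)
    moreover have "\<beta> \<le> \<beta> * exp (x\<^sup>2 / (2 * \<alpha>))" using \<alpha> \<beta> by simp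
    ultimately show ?thesis by (simp add: mult.commute)
  next
    case False
    define s where "s = x - L"
    have s: "s > 0" using False by (simp add: s_def)
    have "x\<^sup>2 - L\<^sup>2 \<ge> s\<^sup>2"
      using L0 s unfolding s_def by (simp add: power2_eq_square algebra_simps mult_left_mono)
    then have gap: "1 + s\<^sup>2 / (2 * \<alpha>) \<le> 1 + (x\<^sup>2 - L\<^sup>2) / (2 * \<alpha>)"
      using \<alpha> by (simp add: divide_right_mono)
    have am_gm: "s \<le> sqrt \<alpha> * (1 + s\<^sup>2 / (2 * \<alpha>))"
    proof -
      define r where "r = sqrt \<alpha>"
      have r: "r > 0" "\<alpha> = r\<^sup>2" using \<alpha> by (auto simp: r_def)
      have "r * (1 + s\<^sup>2 / (2 * r\<^sup>2)) - s = (s - r)\<^sup>2 / (2 * r) + r / 2"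
        using r by (simp add: field_simps power2_eq_square)
      moreover have "(s - r)\<^sup>2 / (2 * r) + r / 2 \<ge> 0" using r by simp
      ultimately have "s \<le> r * (1 + s\<^sup>2 / (2 * r\<^sup>2))" by linarith
      then show ?thesis by (simp only: r_def[symmetric] r(2)[symmetric])
    qed
    have "\<beta> * exp (x\<^sup>2 / (2 * \<alpha>)) = \<beta> * c * exp ((x\<^sup>2 - L\<^sup>2) / (2 * \<alpha>))"
      by (simp add: exp_L[symmetric] exp_add[symmetric] diff_divide_distrib)
    also have "\<dots> \<ge> \<beta> * c * (1 + (x\<^sup>2 - L\<^sup>2) / (2 * \<alpha>))"
      using c1 \<beta> exp_ge_add_one_self by (intro mult_left_mono) (auto simp: add.commute)
    also have "\<beta> * c * (1 + (x\<^sup>2 - L\<^sup>2) / (2 * \<alpha>)) \<ge> (sqrt \<alpha> * U + \<beta>) * (1 + s\<^sup>2 / (2 * \<alpha>))"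
    proof -
      have "\<beta> * c = sqrt \<alpha> * U + \<beta>" using \<beta> by (simp add: c_def field_simps)
      moreover have "sqrt \<alpha> * U + \<beta> \<ge> 0" using U \<alpha> \<beta> by simp
      ultimately show ?thesis using gap by (simp add: mult_left_mono)
    qed
    also have "(sqrt \<alpha> * U + \<beta>) * (1 + s\<^sup>2 / (2 * \<alpha>)) \<ge> s * U + \<beta>"
    proof -
      have "s * U \<le> sqrt \<alpha> * (1 + s\<^sup>2 / (2 * \<alpha>)) * U" using am_gm U by (rule mult_right_mono)
      moreover have "\<beta> * (s\<^sup>2 / (2 * \<alpha>)) \<ge> 0" using \<alpha> \<beta> by simp
      ultimately show ?thesis by (simp add: algebra_simps add_divide_distrib)
    qed
    finally show ?thesis by (simp add: s_def algebra_simps)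
  qed
  then show ?thesis by (simp add: L_def c_def)
qed

lemma convex_on_exp_divide: "convex_on UNIV (\<lambda>s::real. exp (s / D))"
proof (rule convex_onI)
  fix t x y :: real
  assume "0 < t" "t < 1"
  have "exp (((1 - t) *\<^sub>R x + t *\<^sub>R y) / D) = exp ((1 - t) *\<^sub>R (x / D) + t *\<^sub>R (y / D))"
    by (simp add: add_divide_distrib)
  also have "\<dots> \<le> (1 - t) * exp (x / D) + t * exp (y / D)"
    using \<open>0 < t\<close> \<open>t < 1\<close> by (intro convex_onD[OF exp_convex]) auto
  finally show "exp (((1 - t) *\<^sub>R x + t *\<^sub>R y) / D) \<le> (1 - t) * exp (x / D) + t * exp (y / D)" .
qed simp

text \<open>Since \<open>\<parallel>\<theta> - g\<parallel>\<^sup>2\<close> lies below the convex combination of \<open>(\<parallel>\<theta>\<parallel> \<plusminus> G)\<^sup>2\<close> with weights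
  determined by \<open>\<langle>g, hat \<theta>\<rangle>\<close>, the worst case for \<open>g\<close> is one-dimensional.\<close>
lemma inner_central_difference_plus_convex_le:
  fixes \<theta> g :: "'a::real_inner" and \<psi> :: "real \<Rightarrow> real" and G :: real
  assumes \<psi>: "convex_on UNIV \<psi>" "mono \<psi>" and G: "G > 0" and g: "norm g \<le> G"
  shows "inner g (((\<psi> ((norm \<theta> + G)\<^sup>2) - \<psi> ((norm \<theta> - G)\<^sup>2)) / (2 * G)) *\<^sub>R hat \<theta>)
           + \<psi> ((norm (\<theta> - g))\<^sup>2)
         \<le> (\<psi> ((norm \<theta> + G)\<^sup>2) + \<psi> ((norm \<theta> - G)\<^sup>2)) / 2"
proof -
  define x where "x = norm \<theta>"
  define \<gamma> where "\<gamma> = inner g (hat \<theta>)"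
  define l where "l = (G + \<gamma>) / (2 * G)"
  have "\<bar>\<gamma>\<bar> \<le> norm g * norm (hat \<theta>)" unfolding \<gamma>_def by (rule Cauchy_Schwarz_ineq2)
  also have "\<dots> \<le> G * 1" using g G by (intro mult_mono) (auto simp: hat_def)
  finally have l: "0 \<le> l" "l \<le> 1" using G by (auto simp: l_def field_simps)
  have "inner \<theta> g = x * \<gamma>"
    by (cases "\<theta> = 0") (simp_all add: \<gamma>_def hat_def x_def inner_commute)
  moreover have "(norm g)\<^sup>2 \<le> G\<^sup>2" using g by (simp add: power_mono)
  ultimately have "(norm (\<theta> - g))\<^sup>2 \<le> x\<^sup>2 - 2 * x * \<gamma> + G\<^sup>2"
    by (simp add: x_def power2_norm_eq_inner inner_diff inner_commute)
  also have "\<dots> = (1 - l) *\<^sub>R (x + G)\<^sup>2 + l *\<^sub>R (x - G)\<^sup>2"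
    using G by (simp add: l_def field_simps power2_eq_square)
  finally have "\<psi> ((norm (\<theta> - g))\<^sup>2) \<le> \<psi> ((1 - l) *\<^sub>R (x + G)\<^sup>2 + l *\<^sub>R (x - G)\<^sup>2)"
    by (rule monoD[OF \<psi>(2)])
  also have "\<dots> \<le> (1 - l) * \<psi> ((x + G)\<^sup>2) + l * \<psi> ((x - G)\<^sup>2)"
    using l by (intro convex_onD[OF \<psi>(1)]) auto
  finally have "\<psi> ((norm (\<theta> - g))\<^sup>2) \<le> (1 - l) * \<psi> ((x + G)\<^sup>2) + l * \<psi> ((x - G)\<^sup>2)" .
  moreover have "inner g (((\<psi> ((x + G)\<^sup>2) - \<psi> ((x - G)\<^sup>2)) / (2 * G)) *\<^sub>R hat \<theta>)
      = (\<psi> ((x + G)\<^sup>2) - \<psi> ((x - G)\<^sup>2)) / (2 * G) * \<gamma>"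
    by (simp add: \<gamma>_def)
  moreover have "(\<psi> ((x + G)\<^sup>2) - \<psi> ((x - G)\<^sup>2)) / (2 * G) * \<gamma>
      + ((1 - l) * \<psi> ((x + G)\<^sup>2) + l * \<psi> ((x - G)\<^sup>2))
      = (\<psi> ((x + G)\<^sup>2) + \<psi> ((x - G)\<^sup>2)) / 2"
    using G by (simp add: l_def field_simps)
  ultimately show ?thesis unfolding x_def by linarith
qed

lemma average_one_exp_le:
  fixes h :: real
  assumes "h \<ge> 0"
  shows "(1 + exp h) / 2 \<le> exp (h / 2 + h\<^sup>2 / 8)"
proof -
  have "- h * (1/2) + ln (1 + (1/2) * (exp h - 1)) \<le> h\<^sup>2 / 8"
    using assms by (rule Hoeffdings_lemma_aux) simp
  moreover have "1 + (1/2) * (exp h - 1) = (1 + exp h) / 2" by (simp add: field_simps)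
  ultimately have "ln ((1 + exp h) / 2) \<le> h / 2 + h\<^sup>2 / 8" by (simp only:)
  then have "exp (ln ((1 + exp h) / 2)) \<le> exp (h / 2 + h\<^sup>2 / 8)" by simp
  moreover have "(1 + exp h) / 2 > 0" by (simp add: add_pos_pos)
  ultimately show ?thesis by (simp only: exp_ln)
qed

lemma average_exp_shifted_square_le:
  fixes D x G :: real
  assumes D: "D > 0" and x: "x \<ge> 0" and G: "G \<ge> 0"
  shows "(exp ((x + G)\<^sup>2 / D) + exp ((x - G)\<^sup>2 / D)) / 2
    \<le> exp ((x\<^sup>2 + G\<^sup>2) / D + 2 * x\<^sup>2 * G\<^sup>2 / D\<^sup>2)"
proof -
  define h where "h = 4 * x * G / D"
  have "(exp ((x + G)\<^sup>2 / D) + exp ((x - G)\<^sup>2 / D)) / 2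
      = exp ((x - G)\<^sup>2 / D) * ((1 + exp h) / 2)"
    using D by (simp add: h_def exp_add[symmetric] field_simps power2_eq_square)
  also have "\<dots> \<le> exp ((x - G)\<^sup>2 / D) * exp (h / 2 + h\<^sup>2 / 8)"
    using D x G by (intro mult_left_mono average_one_exp_le) (auto simp: h_def)
  also have "\<dots> = exp ((x\<^sup>2 + G\<^sup>2) / D + 2 * x\<^sup>2 * G\<^sup>2 / D\<^sup>2)"
    using D by (simp add: h_def exp_add[symmetric] field_simps power2_eq_square)
  finally show ?thesis .
qed

lemma average_exp_shifted_square_le_sqrt:
  fixes D G x c :: real
  assumes D: "D > 0" and c: "c \<ge> 2" and x: "x \<ge> 0" and G: "G \<ge> 0"
  shows "(exp ((x + G)\<^sup>2 / (D + c * G\<^sup>2)) + exp ((x - G)\<^sup>2 / (D + c * G\<^sup>2))) / 2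
     \<le> sqrt ((D + c * G\<^sup>2) / D) * exp (x\<^sup>2 / D)"
proof -
  define D' where "D' = D + c * G\<^sup>2"
  have "c * G\<^sup>2 \<ge> 0" using c by simp
  then have D': "D' \<ge> D" "D' > 0" using D by (auto simp: D'_def)
  have x_terms: "x\<^sup>2 / D' + 2 * x\<^sup>2 * G\<^sup>2 / D'\<^sup>2 \<le> x\<^sup>2 / D"
  proof -
    have "x\<^sup>2 / D - x\<^sup>2 / D' = x\<^sup>2 * (c * G\<^sup>2) / (D * D')"
      using D D' by (simp add: D'_def field_simps)
    moreover have "x\<^sup>2 * (c * G\<^sup>2) / (D * D') - 2 * x\<^sup>2 * G\<^sup>2 / D'\<^sup>2
        = x\<^sup>2 * G\<^sup>2 * (c * D' - 2 * D) / (D * D'\<^sup>2)"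
      using D D' by (simp add: field_simps power2_eq_square)
    ultimately have "x\<^sup>2 / D - (x\<^sup>2 / D' + 2 * x\<^sup>2 * G\<^sup>2 / D'\<^sup>2)
        = x\<^sup>2 * G\<^sup>2 * (c * D' - 2 * D) / (D * D'\<^sup>2)"
      by linarith
    moreover have slack: "c * D' - 2 * D \<ge> 0"
    proof -
      have "2 * D' \<le> c * D'" using c D' by (intro mult_right_mono) auto
      then show ?thesis using D' by linarith
    qed
    moreover have "x\<^sup>2 * G\<^sup>2 * (c * D' - 2 * D) / (D * D'\<^sup>2) \<ge> 0"
      using D D' slack by (intro divide_nonneg_pos mult_nonneg_nonneg) auto
    ultimately show ?thesis by linarith
  qed
  have ln_ratio: "G\<^sup>2 / D' \<le> ln (D' / D) / 2"
  proof -
    have "ln (D / D') \<le> D / D' - 1" using D D' by (intro ln_le_minus_one) auto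
    moreover have "D / D' - 1 = - (c * G\<^sup>2 / D')" using D' by (simp add: D'_def field_simps)
    moreover have "ln (D' / D) = - ln (D / D')" using D D' by (simp add: ln_div)
    moreover have "2 * G\<^sup>2 / D' \<le> c * G\<^sup>2 / D'"
      using c D' by (intro divide_right_mono mult_right_mono) auto
    ultimately show ?thesis by simp
  qed
  have "(exp ((x + G)\<^sup>2 / D') + exp ((x - G)\<^sup>2 / D')) / 2
    \<le> exp ((x\<^sup>2 + G\<^sup>2) / D' + 2 * x\<^sup>2 * G\<^sup>2 / D'\<^sup>2)"
    using D'(2) x G by (rule average_exp_shifted_square_le)
  also have "\<dots> \<le> exp (x\<^sup>2 / D + ln (D' / D) / 2)"
  proof -
    have "(x\<^sup>2 + G\<^sup>2) / D' = x\<^sup>2 / D' + G\<^sup>2 / D'" by (rule add_divide_distrib)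
    then show ?thesis using x_terms ln_ratio by simp
  qed
  also have "\<dots> = sqrt (D' / D) * exp (x\<^sup>2 / D)"
    using D D' by (simp add: exp_add powr_half_sqrt[symmetric] powr_def)
  finally show ?thesis by (simp add: D'_def)
qed

lemma sum_le_potential_drop:
  fixes f \<Phi> :: "nat \<Rightarrow> real"
  assumes "\<And>n. n < T \<Longrightarrow> f (Suc n) + \<Phi> (Suc n) \<le> \<Phi> n"
  shows "(\<Sum>t=1..T. f t) \<le> \<Phi> 0 - \<Phi> T"
  using assms
proof (induction T)
  case (Suc T)
  then have "(\<Sum>t=1..T. f t) \<le> \<Phi> 0 - \<Phi> T" and "f (Suc T) + \<Phi> (Suc T) \<le> \<Phi> T" by simp_all
  then show ?case by simp
qed simp

lemma theta_0: "theta g 0 = 0"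
  by (simp add: theta_def)

lemma theta_Suc: "theta g (Suc n) = theta g n - g (Suc n)"
  by (simp add: theta_def)

lemma regret_eq_sum_plus_inner_theta:
  "regret T w g u = (\<Sum>t=1..T. inner (g t) (w t)) + inner (theta g T) u"
  by (simp add: regret_def theta_def inner_diff_right sum_subtractf inner_sum_left)

locale kt_parameters =
  fixes eps G a :: real and T :: nat
  assumes T_pos: "T \<ge> 1" and G_pos: "G > 0" and eps_pos: "eps > 0"
    and a_large: "a > G\<^sup>2 * pi / 2"
begin

definition denom :: "nat \<Rightarrow> real" where
  "denom n = 2 * a * real T - pi * G\<^sup>2 * (real T - real n)"

definition potential :: "nat \<Rightarrow> real \<Rightarrow> real" where
  "potential n r = eps * exp (r\<^sup>2 / denom n) / sqrt (denom n / (2 * a * real T))"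

lemma a_pos: "a > 0"
proof -
  have "G\<^sup>2 * pi / 2 > 0" using G_pos by simp
  then show ?thesis using a_large by linarith
qed

lemma denom_pos: "n \<le> T \<Longrightarrow> denom n > 0"
proof -
  assume "n \<le> T"
  then have "pi * G\<^sup>2 * (real T - real n) \<le> pi * G\<^sup>2 * real T" by (simp add: mult_left_mono)
  moreover have "pi * G\<^sup>2 * real T < 2 * a * real T"
    using a_large T_pos by (intro mult_strict_right_mono) (auto simp: mult.commute)
  ultimately show ?thesis unfolding denom_def by linarith
qed

lemma denom_Suc: "denom (Suc n) = denom n + pi * G\<^sup>2"
  by (simp add: denom_def algebra_simps)

lemma kt_play_eq:
  "kt_play eps G a T g n =
     ((potential (Suc n) (norm (theta g n) + G) - potential (Suc n) (norm (theta g n) - G)) / (2 * G))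
       *\<^sub>R hat (theta g n)"
proof -
  have "1 - pi * G\<^sup>2 * (real T - real n - 1) / (2 * a * real T) = denom (Suc n) / (2 * a * real T)"
    using a_pos T_pos by (simp add: denom_def field_simps)
  moreover have "2 * a * real T - pi * G\<^sup>2 * (real T - real n - 1) = denom (Suc n)"
    by (simp add: denom_def)
  ultimately show ?thesis
    by (simp add: kt_play_def potential_def Let_def diff_divide_distrib[symmetric]
        right_diff_distrib mult_ac)
qed

lemma potential_step:
  assumes n: "n < T" and g: "norm (g (Suc n)) \<le> G"
  shows "inner (g (Suc n)) (kt_play eps G a T g n) + potential (Suc n) (norm (theta g (Suc n)))
    \<le> potential n (norm (theta g n))"
proof -
  define K where "K = eps / sqrt (denom (Suc n) / (2 * a * real T))"
  define \<psi> where "\<psi> s = K * exp (s / denom (Suc n))" for s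
  define x where "x = norm (theta g n)"
  have K: "K > 0" using denom_pos[of "Suc n"] n eps_pos a_pos T_pos by (simp add: K_def)
  have "convex_on UNIV \<psi>"
    unfolding \<psi>_def using K by (intro convex_on_cmul convex_on_exp_divide) simp
  moreover have "mono \<psi>"
    using K denom_pos[of "Suc n"] n by (auto intro!: monoI simp: \<psi>_def divide_right_mono)
  ultimately have "inner (g (Suc n)) (((\<psi> ((x + G)\<^sup>2) - \<psi> ((x - G)\<^sup>2)) / (2 * G)) *\<^sub>R hat (theta g n))
      + \<psi> ((norm (theta g n - g (Suc n)))\<^sup>2) \<le> (\<psi> ((x + G)\<^sup>2) + \<psi> ((x - G)\<^sup>2)) / 2"
    unfolding x_def using G_pos g by (rule inner_central_difference_plus_convex_le)
  moreover have "potential (Suc n) r = \<psi> (r\<^sup>2)" for r by (simp add: potential_def \<psi>_def K_def)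
  ultimately have "inner (g (Suc n)) (kt_play eps G a T g n) + potential (Suc n) (norm (theta g (Suc n)))
      \<le> (\<psi> ((x + G)\<^sup>2) + \<psi> ((x - G)\<^sup>2)) / 2"
    by (simp only: kt_play_eq x_def theta_Suc)
  also have "\<dots> = K * ((exp ((x + G)\<^sup>2 / (denom n + pi * G\<^sup>2))
      + exp ((x - G)\<^sup>2 / (denom n + pi * G\<^sup>2))) / 2)"
    by (simp add: \<psi>_def denom_Suc field_simps)
  also have "\<dots> \<le> K * (sqrt ((denom n + pi * G\<^sup>2) / denom n) * exp (x\<^sup>2 / denom n))"
    using K denom_pos[of n] n pi_gt3 G_pos
    by (intro mult_left_mono average_exp_shifted_square_le_sqrt) (auto simp: x_def)
  also have "\<dots> = potential n x"
  proof -
    have "sqrt ((denom n + pi * G\<^sup>2) / denom n)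
        = sqrt (denom (Suc n) / (2 * a * real T)) / sqrt (denom n / (2 * a * real T))"
      using a_pos T_pos by (simp add: denom_Suc real_sqrt_divide[symmetric])
    then show ?thesis using denom_pos[of "Suc n"] n a_pos T_pos by (simp add: K_def potential_def)
  qed
  finally show ?thesis by (simp add: x_def)
qed

lemma potential_0: "potential 0 0 = eps * (1 - pi * G\<^sup>2 / (2 * a)) powr (-1/2)"
proof -
  define q where "q = denom 0 / (2 * a * real T)"
  have q_eq: "1 - pi * G\<^sup>2 / (2 * a) = q"
    using a_pos T_pos by (simp add: q_def denom_def field_simps)
  have "q powr (-1/2) = inverse (sqrt q)"
    using denom_pos[of 0] a_pos T_pos by (simp add: q_def powr_minus[symmetric] powr_half_sqrt[symmetric])
  moreover have "potential 0 0 = eps * inverse (sqrt q)"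
    by (simp add: potential_def q_def inverse_eq_divide)
  ultimately show ?thesis unfolding q_eq by (simp only:)
qed

lemma potential_T: "potential T r = eps * exp (r\<^sup>2 / (2 * (a * real T)))"
  using a_pos T_pos by (simp add: potential_def denom_def mult.assoc)

end

theorem theorem11:
  fixes g :: "nat \<Rightarrow> 'a::{real_inner, complete_space}" and u :: 'a
    and T :: nat and G eps a :: real
  assumes "T \<ge> 1" and "G > 0" and "eps > 0" and "a > G\<^sup>2 * pi / 2"
    and "\<And>t. t \<in> {1..T} \<Longrightarrow> norm (g t) \<le> G"
  shows "regret T (\<lambda>t. kt_play eps G a T g (t - 1)) g u
    \<le> norm u * sqrt (2 * a * real T * ln (sqrt (a * real T) * norm u / eps + 1))
       + eps * ((1 - pi * G\<^sup>2 / (2 * a)) powr (-1/2) - 1)"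
proof -
  interpret kt_parameters eps G a T using assms(1-4) by unfold_locales
  let ?x = "norm (theta g T)"
  have "(\<Sum>t=1..T. inner (g t) (kt_play eps G a T g (t - 1)))
      \<le> potential 0 (norm (theta g 0)) - potential T ?x"
    by (rule sum_le_potential_drop[where \<Phi> = "\<lambda>n. potential n (norm (theta g n))"])
      (simp add: potential_step assms(5))
  moreover have "inner (theta g T) u \<le> ?x * norm u" by (rule norm_cauchy_schwarz)
  moreover have "?x * norm u - eps * exp (?x\<^sup>2 / (2 * (a * real T)))
      \<le> norm u * sqrt (2 * (a * real T) * ln (sqrt (a * real T) * norm u / eps + 1)) - eps"
    using a_pos T_pos eps_pos by (intro mult_minus_exp_square_le) auto
  ultimately show ?thesis
    unfolding regret_eq_sum_plus_inner_theta theta_0 norm_zero potential_0 potential_T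
    by (simp add: algebra_simps)
qed

end
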